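(* Let $(X_i)_{i\in\mathbb{Z}}$ be a sequence (not necessarily stationary) of square-integrable random variables adapted to a nondecreasing filtration $(\mathcal{F}_i)_{i\in\mathbb{Z}}$. For $n\ge 1$ let $S_n=\sum_{k=1}^n X_k$ and $M_n=\max_{1\le i\le n}|S_i|$. Then for every $n\ge1$, $$\mathbb{E}(M_n)^2 \le 4\sum_{k=1}^n \mathbb{E}(X_k^2) + 12\sum_{k=1}^{n-1}\big\|X_k\,\mathbb{E}(S_n-S_k\mid\mathcal{F}_k)\big\|_1 .$$
   Context: $\|\cdot\|_1$ denotes the $\mathbb{L}_1$ norm, $\|Y\|_1=\mathbb{E}|Y|$. *)

theory Defs
  imports "HOL-Probability.Probability"
begin

end

theory Submission
  imports Defs
begin

(* Write S_k for the partial sums, M_k = max_{i<=k} |S_i| (with S_0 = 0) and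
   d_k = M_k - M_(k-1), so that 0 <= d_k <= |X_k|.  Since M only grows at times k with
   M_k = |S_k|, pathwise M_n^2 <= 2 sum_k |S_k| d_k = 2 sum_k e_k S_k with e_k = sgn(S_k) d_k.
   Substituting S_k = S_n - (S_n - S_k), the bound |sum_k e_k| <= M_n and
   2 |S_n| M_n <= M_n^2/2 + 2 S_n^2 give M_n^2 <= 4 S_n^2 - 4 sum_k e_k (S_n - S_k);
   expanding S_n^2 yields
     M_n^2 <= 4 sum_k X_k^2 + sum_(k<n) Y_k (S_n - S_k),   Y_k = 8 X_k - 4 e_k,
   where Y_k is F_k-measurable with |Y_k| <= 12 |X_k|.  Taking expectations, each
   S_n - S_k may be replaced by E(S_n - S_k | F_k). *)

definition max_abs_psum :: "(nat \<Rightarrow> real) \<Rightarrow> nat \<Rightarrow> real" where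
  "max_abs_psum x n = (MAX i\<in>{0..n}. \<bar>\<Sum>k=1..i. x k\<bar>)"

(* In the notation above this is e_k, so that e_k S_k = |S_k| d_k; also e_0 = 0 as sgn 0 = 0. *)
definition max_abs_psum_incr :: "(nat \<Rightarrow> real) \<Rightarrow> nat \<Rightarrow> real" where
  "max_abs_psum_incr x k = sgn (\<Sum>j=1..k. x j) * (max_abs_psum x k - max_abs_psum x (k - 1))"

lemma max_abs_psum_0 [simp]: "max_abs_psum x 0 = 0"
  by (simp add: max_abs_psum_def)

lemma max_abs_psum_Suc:
  "max_abs_psum x (Suc n) = max \<bar>\<Sum>k=1..Suc n. x k\<bar> (max_abs_psum x n)"
proof -
  have "{0..Suc n} = insert (Suc n) {0..n}" by auto
  then show ?thesis by (simp add: max_abs_psum_def)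
qed

lemma Max_abs_psum_eq_max_abs_psum:
  assumes "n \<ge> 1"
  shows "Max ((\<lambda>i. \<bar>\<Sum>k=1..i. x k\<bar>) ` {1..n}) = max_abs_psum x n"
proof -
  have "{0..n} = insert 0 {1..n}" by auto
  with assms show ?thesis
    by (auto simp: max_abs_psum_def max_def Max_ge_iff)
qed

lemma max_abs_psum_mono_Suc: "max_abs_psum x n \<le> max_abs_psum x (Suc n)"
  by (simp add: max_abs_psum_Suc)

lemma abs_psum_le_max_abs_psum: "\<bar>\<Sum>k=1..n. x k\<bar> \<le> max_abs_psum x n"
  by (cases n) (simp_all add: max_abs_psum_Suc)

lemma max_abs_psum_Suc_le: "max_abs_psum x (Suc n) \<le> max_abs_psum x n + \<bar>x (Suc n)\<bar>"
  using abs_psum_le_max_abs_psum[of x n] max_abs_psum_mono_Suc[of x n]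
  by (simp add: max_abs_psum_Suc)

lemma abs_max_abs_psum_incr_Suc:
  "\<bar>max_abs_psum_incr x (Suc n)\<bar> \<le> max_abs_psum x (Suc n) - max_abs_psum x n"
  using max_abs_psum_mono_Suc[of x n]
  by (simp add: max_abs_psum_incr_def abs_mult abs_sgn_eq)

lemma abs_max_abs_psum_incr_le: "\<bar>max_abs_psum_incr x k\<bar> \<le> \<bar>x k\<bar>"
proof (cases k)
  case (Suc n)
  then show ?thesis
    using abs_max_abs_psum_incr_Suc[of x n] max_abs_psum_Suc_le[of x n] by simp
qed (simp add: max_abs_psum_incr_def)

lemma abs_sum_max_abs_psum_incr_le: "\<bar>\<Sum>k=1..n. max_abs_psum_incr x k\<bar> \<le> max_abs_psum x n"
proof (induction n)
  case (Suc n)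
  then show ?case
    using abs_max_abs_psum_incr_Suc[of x n] by (simp add: sum.cl_ivl_Suc)
qed simp

lemma square_max_abs_psum_le:
  "(max_abs_psum x n)\<^sup>2 \<le> 2 * (\<Sum>k=1..n. max_abs_psum_incr x k * (\<Sum>j=1..k. x j))"
proof (induction n)
  case (Suc n)
  let ?s = "\<Sum>j=1..Suc n. x j" and ?m = "max_abs_psum x n" and ?m' = "max_abs_psum x (Suc n)"
  have incr: "max_abs_psum_incr x (Suc n) * ?s = \<bar>?s\<bar> * (?m' - ?m)"
    by (simp add: max_abs_psum_incr_def abs_sgn mult.commute)
  have "?m'\<^sup>2 - ?m\<^sup>2 \<le> 2 * (\<bar>?s\<bar> * (?m' - ?m))"
  proof (cases "\<bar>?s\<bar> \<le> ?m")
    case False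
    then have "?m' = \<bar>?s\<bar>" by (simp add: max_abs_psum_Suc)
    moreover have "?m'\<^sup>2 - ?m\<^sup>2 = 2 * (?m' * (?m' - ?m)) - (?m' - ?m)\<^sup>2"
      by (simp add: power2_eq_square algebra_simps)
    ultimately show ?thesis by simp
  qed (simp add: max_abs_psum_Suc max_def)
  with Suc.IH incr show ?case by (simp add: sum.cl_ivl_Suc)
qed simp

lemma square_sum_eq_sum_squares_plus_tails:
  fixes x :: "nat \<Rightarrow> 'a::comm_ring_1"
  shows "(\<Sum>j=1..n. x j)\<^sup>2 = (\<Sum>k=1..n. (x k)\<^sup>2) + 2 * (\<Sum>k=1..n. x k * (\<Sum>j=k+1..n. x j))"
proof (induction n)
  case (Suc n)
  have "(\<Sum>k=1..n. x k * (\<Sum>j=k+1..Suc n. x j))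
      = (\<Sum>k=1..n. x k * (\<Sum>j=k+1..n. x j)) + (\<Sum>k=1..n. x k) * x (Suc n)"
    by (simp add: sum.cl_ivl_Suc distrib_left sum.distrib sum_distrib_right)
  with Suc.IH show ?case
    by (simp add: sum.cl_ivl_Suc power2_eq_square algebra_simps)
qed simp

lemma sum_atLeastAtMost_drop_last:
  fixes f :: "nat \<Rightarrow> 'a::comm_monoid_add"
  assumes "f n = 0"
  shows "(\<Sum>k=1..n. f k) = (\<Sum>k=1..n-1. f k)"
  using assms by (cases n) (simp_all add: sum.cl_ivl_Suc)

lemma max_abs_psum_square_le:
  "(max_abs_psum x n)\<^sup>2 \<le> 4 * (\<Sum>k=1..n. (x k)\<^sup>2)
     + (\<Sum>k=1..n-1. (8 * x k - 4 * max_abs_psum_incr x k) * (\<Sum>j=k+1..n. x j))"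
proof -
  define s where "s = (\<Sum>j=1..n. x j)"
  define m where "m = max_abs_psum x n"
  define e where "e = max_abs_psum_incr x"
  define R where "R = (\<lambda>k. \<Sum>j=k+1..n. x j)"
  have psum_eq: "(\<Sum>j=1..k. x j) = s - R k" if "k \<in> {1..n}" for k
    using that sum.ub_add_nat[of 1 k x "n - k"] by (simp add: s_def R_def)
  have "m\<^sup>2 \<le> 2 * (\<Sum>k=1..n. e k * (s - R k))"
    using square_max_abs_psum_le[of x n] psum_eq by (simp add: m_def e_def)
  also have "\<dots> = 2 * (s * (\<Sum>k=1..n. e k)) - 2 * (\<Sum>k=1..n. e k * R k)"
    by (simp add: algebra_simps sum_subtractf sum_distrib_left)
  also have "s * (\<Sum>k=1..n. e k) \<le> \<bar>s\<bar> * m"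
    using abs_sum_max_abs_psum_incr_le[of x n] unfolding m_def e_def
    by (metis abs_ge_self abs_ge_zero abs_mult mult_left_mono order_trans)
  also have "2 * (\<bar>s\<bar> * m) \<le> m\<^sup>2 / 2 + 2 * s\<^sup>2"
    using zero_le_power2[of "m / 2 - \<bar>s\<bar>"] by (simp add: power2_eq_square algebra_simps)
  finally have "m\<^sup>2 \<le> 4 * s\<^sup>2 - 4 * (\<Sum>k=1..n. e k * R k)"
    by simp
  also have "s\<^sup>2 = (\<Sum>k=1..n. (x k)\<^sup>2) + 2 * (\<Sum>k=1..n. x k * R k)"
    unfolding s_def R_def by (rule square_sum_eq_sum_squares_plus_tails)
  finally have "m\<^sup>2 \<le> 4 * (\<Sum>k=1..n. (x k)\<^sup>2) + (\<Sum>k=1..n. (8 * x k - 4 * e k) * R k)"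
    by (simp add: algebra_simps sum_subtractf sum_distrib_left)
  also have "(\<Sum>k=1..n. (8 * x k - 4 * e k) * R k) = (\<Sum>k=1..n-1. (8 * x k - 4 * e k) * R k)"
    by (rule sum_atLeastAtMost_drop_last) (simp add: R_def)
  finally show ?thesis by (simp add: m_def e_def R_def)
qed

lemma borel_measurable_max_abs_psum:
  assumes "\<And>k. k \<le> n \<Longrightarrow> (\<lambda>\<omega>. x \<omega> k) \<in> borel_measurable N"
  shows "(\<lambda>\<omega>. max_abs_psum (x \<omega>) n) \<in> borel_measurable N"
  unfolding max_abs_psum_def using assms
  by (intro borel_measurable_Max borel_measurable_abs borel_measurable_sum) auto

lemma borel_measurable_max_abs_psum_incr:
  assumes "\<And>j. j \<le> k \<Longrightarrow> (\<lambda>\<omega>. x \<omega> j) \<in> borel_measurable N"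
  shows "(\<lambda>\<omega>. max_abs_psum_incr (x \<omega>) k) \<in> borel_measurable N"
proof -
  have [measurable]: "(\<lambda>\<omega>. max_abs_psum (x \<omega>) i) \<in> borel_measurable N" if "i \<le> k" for i
    using that assms by (intro borel_measurable_max_abs_psum) auto
  have [measurable]: "(\<lambda>\<omega>. \<Sum>j=1..k. x \<omega> j) \<in> borel_measurable N"
    using assms by (intro borel_measurable_sum) auto
  show ?thesis unfolding max_abs_psum_incr_def by measurable
qed

lemma integrable_mult_of_square_integrable:
  fixes f g :: "'a \<Rightarrow> real"
  assumes "f \<in> borel_measurable M" "g \<in> borel_measurable M"
    and "integrable M (\<lambda>x. (f x)\<^sup>2)" "integrable M (\<lambda>x. (g x)\<^sup>2)"
  shows "integrable M (\<lambda>x. f x * g x)"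
proof (rule Bochner_Integration.integrable_bound)
  show "integrable M (\<lambda>x. (f x)\<^sup>2 + (g x)\<^sup>2)" using assms by simp
  show "AE x in M. norm (f x * g x) \<le> norm ((f x)\<^sup>2 + (g x)\<^sup>2)"
  proof (rule AE_I2)
    fix x
    have "\<bar>f x * g x\<bar> \<le> 2 * \<bar>f x\<bar> * \<bar>g x\<bar>" by (simp add: abs_mult)
    also have "\<dots> \<le> (f x)\<^sup>2 + (g x)\<^sup>2" using sum_squares_bound[of "\<bar>f x\<bar>" "\<bar>g x\<bar>"] by simp
    finally show "norm (f x * g x) \<le> norm ((f x)\<^sup>2 + (g x)\<^sup>2)" by simp
  qed
qed (use assms in simp)

lemma (in sigma_finite_subalgebra) integral_mult_le_cond_exp:
  fixes X Y R :: "'a \<Rightarrow> real"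
  assumes Y: "Y \<in> borel_measurable F" and X: "X \<in> borel_measurable F"
    and R: "R \<in> borel_measurable M" and XR: "integrable M (\<lambda>\<omega>. X \<omega> * R \<omega>)"
    and bound: "\<And>\<omega>. \<bar>Y \<omega>\<bar> \<le> c * \<bar>X \<omega>\<bar>"
  shows "integrable M (\<lambda>\<omega>. Y \<omega> * R \<omega>)"
    and "(\<integral>\<omega>. Y \<omega> * R \<omega> \<partial>M) \<le> c * (\<integral>\<omega>. \<bar>X \<omega> * real_cond_exp M F R \<omega>\<bar> \<partial>M)"
proof -
  let ?C = "real_cond_exp M F R"
  have abs_mult_le: "\<bar>Y \<omega> * Z\<bar> \<le> \<bar>c * (X \<omega> * Z)\<bar>" for \<omega> Z
  proof -
    have "c * \<bar>X \<omega>\<bar> \<le> \<bar>c\<bar> * \<bar>X \<omega>\<bar>" by (intro mult_right_mono) simp_all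
    with bound[of \<omega>] have "\<bar>Y \<omega>\<bar> \<le> \<bar>c\<bar> * \<bar>X \<omega>\<bar>" by linarith
    from mult_right_mono[OF this abs_ge_zero[of Z]] show ?thesis
      by (metis abs_mult mult.assoc)
  qed
  have Y_M: "Y \<in> borel_measurable M" using measurable_from_subalg[OF subalg Y] .
  show YR: "integrable M (\<lambda>\<omega>. Y \<omega> * R \<omega>)"
  proof (rule Bochner_Integration.integrable_bound)
    show "integrable M (\<lambda>\<omega>. c * (X \<omega> * R \<omega>))" using XR by simp
    show "AE \<omega> in M. norm (Y \<omega> * R \<omega>) \<le> norm (c * (X \<omega> * R \<omega>))"
      using abs_mult_le by simp
  qed (use Y_M R in simp)
  have XC: "integrable M (\<lambda>\<omega>. X \<omega> * ?C \<omega>)"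
    using real_cond_exp_intg(1)[OF XR X R] .
  have "(\<integral>\<omega>. Y \<omega> * R \<omega> \<partial>M) = (\<integral>\<omega>. Y \<omega> * ?C \<omega> \<partial>M)"
    by (rule sym[OF real_cond_exp_intg(2)[OF YR Y R]])
  also have "\<dots> \<le> (\<integral>\<omega>. c * \<bar>X \<omega> * ?C \<omega>\<bar> \<partial>M)"
  proof (rule integral_mono)
    show "integrable M (\<lambda>\<omega>. Y \<omega> * ?C \<omega>)" using real_cond_exp_intg(1)[OF YR Y R] .
    show "integrable M (\<lambda>\<omega>. c * \<bar>X \<omega> * ?C \<omega>\<bar>)" using XC by simp
    show "Y \<omega> * ?C \<omega> \<le> c * \<bar>X \<omega> * ?C \<omega>\<bar>" for \<omega>
    proof -
      have "Y \<omega> * ?C \<omega> \<le> \<bar>Y \<omega>\<bar> * \<bar>?C \<omega>\<bar>" by (metis abs_ge_self abs_mult)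
      also have "\<dots> \<le> c * \<bar>X \<omega>\<bar> * \<bar>?C \<omega>\<bar>" using bound[of \<omega>] by (intro mult_right_mono) simp_all
      finally show ?thesis by (simp only: abs_mult mult.assoc)
    qed
  qed
  finally show "(\<integral>\<omega>. Y \<omega> * R \<omega> \<partial>M) \<le> c * (\<integral>\<omega>. \<bar>X \<omega> * ?C \<omega>\<bar> \<partial>M)"
    by (simp only: integral_mult_right_zero)
qed

locale square_integrable_adapted = finite_measure M for M :: "'a measure" +
  fixes F :: "int \<Rightarrow> 'a measure" and X :: "int \<Rightarrow> 'a \<Rightarrow> real"
  assumes subalg: "\<And>i. subalgebra M (F i)"
    and filtration_mono: "\<And>i j. i \<le> j \<Longrightarrow> sets (F i) \<subseteq> sets (F j)"
    and adapted: "\<And>i. X i \<in> borel_measurable (F i)"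
    and square_integrable: "\<And>i. integrable M (\<lambda>x. (X i x)\<^sup>2)"
begin

lemma sigma_finite_subalgebra_F: "sigma_finite_subalgebra M (F i)"
  by (rule finite_measure_subalgebra_is_sigma_finite)
    (simp add: finite_measure_subalgebra_def finite_measure_subalgebra_axioms_def
      finite_measure_axioms subalg)

lemma X_measurable_F:
  assumes "i \<le> j"
  shows "X i \<in> borel_measurable (F j)"
proof -
  have "subalgebra (F j) (F i)"
    using subalg[of i] subalg[of j] filtration_mono[OF assms] by (auto simp: subalgebra_def)
  then show ?thesis using adapted measurable_from_subalg by blast
qed

lemma X_measurable: "X i \<in> borel_measurable M"
  using measurable_from_subalg[OF subalg adapted] .

lemma integrable_X_mult_X: "integrable M (\<lambda>\<omega>. X i \<omega> * X j \<omega>)"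
  by (intro integrable_mult_of_square_integrable X_measurable square_integrable)

lemma integral_psum_correction_le:
  fixes k n :: nat
  defines "R \<equiv> \<lambda>\<omega>. \<Sum>j=k+1..n. X (int j) \<omega>"
  shows "integrable M (\<lambda>\<omega>. (8 * X (int k) \<omega> - 4 * max_abs_psum_incr (\<lambda>j. X (int j) \<omega>) k) * R \<omega>)"
    and "(\<integral>\<omega>. (8 * X (int k) \<omega> - 4 * max_abs_psum_incr (\<lambda>j. X (int j) \<omega>) k) * R \<omega> \<partial>M)
           \<le> 12 * (\<integral>\<omega>. \<bar>X (int k) \<omega> * real_cond_exp M (F (int k)) R \<omega>\<bar> \<partial>M)"
proof -
  let ?Y = "\<lambda>\<omega>. 8 * X (int k) \<omega> - 4 * max_abs_psum_incr (\<lambda>j. X (int j) \<omega>) k"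
  have [measurable]: "(\<lambda>\<omega>. max_abs_psum_incr (\<lambda>j. X (int j) \<omega>) k) \<in> borel_measurable (F (int k))"
    by (intro borel_measurable_max_abs_psum_incr X_measurable_F) simp
  have [measurable]: "X (int k) \<in> borel_measurable (F (int k))"
    by (rule adapted)
  have Y: "?Y \<in> borel_measurable (F (int k))"
    by measurable
  have R: "R \<in> borel_measurable M"
    unfolding R_def by (intro borel_measurable_sum X_measurable)
  have XR: "integrable M (\<lambda>\<omega>. X (int k) \<omega> * R \<omega>)"
    unfolding R_def sum_distrib_left by (simp add: integrable_X_mult_X)
  have bound: "\<bar>?Y \<omega>\<bar> \<le> 12 * \<bar>X (int k) \<omega>\<bar>" for \<omega>
    using abs_max_abs_psum_incr_le[of "\<lambda>j. X (int j) \<omega>" k] by linarith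
  note cond_exp = sigma_finite_subalgebra.integral_mult_le_cond_exp
    [OF sigma_finite_subalgebra_F Y adapted R XR bound]
  show "integrable M (\<lambda>\<omega>. ?Y \<omega> * R \<omega>)"
    and "(\<integral>\<omega>. ?Y \<omega> * R \<omega> \<partial>M)
           \<le> 12 * (\<integral>\<omega>. \<bar>X (int k) \<omega> * real_cond_exp M (F (int k)) R \<omega>\<bar> \<partial>M)"
    using cond_exp by blast+
qed

lemma integral_max_abs_psum_square_le:
  "(\<integral>\<omega>. (max_abs_psum (\<lambda>k. X (int k) \<omega>) n)\<^sup>2 \<partial>M)
     \<le> 4 * (\<Sum>k=1..n. \<integral>\<omega>. (X (int k) \<omega>)\<^sup>2 \<partial>M)
       + (\<Sum>k=1..n-1. \<integral>\<omega>. (8 * X (int k) \<omega> - 4 * max_abs_psum_incr (\<lambda>j. X (int j) \<omega>) k)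
                              * (\<Sum>j=k+1..n. X (int j) \<omega>) \<partial>M)"
proof -
  let ?Y = "\<lambda>k \<omega>. (8 * X (int k) \<omega> - 4 * max_abs_psum_incr (\<lambda>j. X (int j) \<omega>) k)
                   * (\<Sum>j=k+1..n. X (int j) \<omega>)"
  let ?B = "\<lambda>\<omega>. 4 * (\<Sum>k=1..n. (X (int k) \<omega>)\<^sup>2) + (\<Sum>k=1..n-1. ?Y k \<omega>)"
  have int_Y: "integrable M (?Y k)" for k
    using integral_psum_correction_le(1) .
  have pathwise: "(max_abs_psum (\<lambda>k. X (int k) \<omega>) n)\<^sup>2 \<le> ?B \<omega>" for \<omega>
    by (rule max_abs_psum_square_le)
  have "(\<integral>\<omega>. (max_abs_psum (\<lambda>k. X (int k) \<omega>) n)\<^sup>2 \<partial>M) \<le> (\<integral>\<omega>. ?B \<omega> \<partial>M)"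
  proof (rule integral_mono')
    show "integrable M ?B" using square_integrable int_Y by simp
    show "0 \<le> ?B \<omega>" for \<omega> by (rule order_trans[OF zero_le_power2 pathwise])
  qed (rule pathwise)
  also have "(\<integral>\<omega>. ?B \<omega> \<partial>M) = (\<integral>\<omega>. 4 * (\<Sum>k=1..n. (X (int k) \<omega>)\<^sup>2) \<partial>M)
       + (\<integral>\<omega>. (\<Sum>k=1..n-1. ?Y k \<omega>) \<partial>M)"
    by (intro Bochner_Integration.integral_add Bochner_Integration.integrable_sum int_Y)
      (simp add: square_integrable)
  also have "\<dots> = 4 * (\<Sum>k=1..n. \<integral>\<omega>. (X (int k) \<omega>)\<^sup>2 \<partial>M)
       + (\<Sum>k=1..n-1. \<integral>\<omega>. ?Y k \<omega> \<partial>M)"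
    using Bochner_Integration.integral_sum[where f="\<lambda>k \<omega>. (X (int k) \<omega>)\<^sup>2", OF square_integrable]
      Bochner_Integration.integral_sum[where f="?Y", OF int_Y]
    by (simp only: integral_mult_right_zero)
  finally show ?thesis .
qed

end

theorem corollary6:
  fixes M :: "'a measure" and F :: "int \<Rightarrow> 'a measure"
    and X :: "int \<Rightarrow> 'a \<Rightarrow> real" and n :: nat
  assumes "prob_space M"
    and "\<And>i. subalgebra M (F i)"
    and "\<And>i j. i \<le> j \<Longrightarrow> sets (F i) \<subseteq> sets (F j)"
    and "\<And>i. X i \<in> borel_measurable (F i)"
    and "\<And>i. integrable M (\<lambda>x. (X i x)\<^sup>2)"
    and "n \<ge> 1"
  shows "(\<integral>x. (Max ((\<lambda>i. \<bar>\<Sum>k=1..i. X (int k) x\<bar>) ` {1..n}))\<^sup>2 \<partial>M)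
         \<le> 4 * (\<Sum>k=1..n. \<integral>x. (X (int k) x)\<^sup>2 \<partial>M)
           + 12 * (\<Sum>k=1..n-1. \<integral>x. \<bar>X (int k) x *
                 real_cond_exp M (F (int k)) (\<lambda>y. \<Sum>j=k+1..n. X (int j) y) x\<bar> \<partial>M)"
proof -
  interpret square_integrable_adapted M F X
    using prob_space.axioms(1)[OF assms(1)] assms(2-5)
    by (simp add: square_integrable_adapted_def square_integrable_adapted_axioms_def)
  have "(\<integral>x. (Max ((\<lambda>i. \<bar>\<Sum>k=1..i. X (int k) x\<bar>) ` {1..n}))\<^sup>2 \<partial>M)
      = (\<integral>\<omega>. (max_abs_psum (\<lambda>k. X (int k) \<omega>) n)\<^sup>2 \<partial>M)"
    using Max_abs_psum_eq_max_abs_psum[OF assms(6)] by simp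
  also have "\<dots> \<le> 4 * (\<Sum>k=1..n. \<integral>\<omega>. (X (int k) \<omega>)\<^sup>2 \<partial>M)
       + (\<Sum>k=1..n-1. \<integral>\<omega>. (8 * X (int k) \<omega> - 4 * max_abs_psum_incr (\<lambda>j. X (int j) \<omega>) k)
                              * (\<Sum>j=k+1..n. X (int j) \<omega>) \<partial>M)"
    by (rule integral_max_abs_psum_square_le)
  also have "\<dots> \<le> 4 * (\<Sum>k=1..n. \<integral>\<omega>. (X (int k) \<omega>)\<^sup>2 \<partial>M)
       + (\<Sum>k=1..n-1. 12 * (\<integral>\<omega>. \<bar>X (int k) \<omega> *
                 real_cond_exp M (F (int k)) (\<lambda>y. \<Sum>j=k+1..n. X (int j) y) \<omega>\<bar> \<partial>M))"
    by (intro add_left_mono sum_mono integral_psum_correction_le(2))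
  finally show ?thesis by (simp only: sum_distrib_left)
qed

end
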